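(* Let $\mathcal{P}=\{X_i\mid i\in I\}$ be a partition of a set $X$, and let $f\in\Sigma(X,\mathcal{P})$. Then $f$ is an idempotent ($f^2=f$) if and only if each block map of $B(f,I)$ is an idempotent.
   Context: Maps are written on the right and composed left to right. For a partition $\mathcal{P}=\{X_i\mid i\in I\}$ of $X$ (distinct indices for distinct blocks), $T(X,\mathcal{P})=\{f\colon X\to X \mid \forall i\ \exists j:\ X_if\subseteq X_j\}$ and $\Sigma(X,\mathcal{P})=\{f\in T(X,\mathcal{P})\mid Xf\cap X_i\neq\emptyset\ \forall i\in I\}$. A block map is a map whose domain and codomain are both blocks of $\mathcal{P}$. If $Af\subseteq B$, the map $g\colon A\to B$, $xg=xf$, is said to be induced by $f$. For $f\in T(X,\mathcal{P})$ and $i\in I$, let $f_i\colon X_i\to X_j$ be the block map induced by $f$, where $X_j$ is the (unique) block containing $X_if$; $B(f,I)=\{f_i\mid i\in I\}$. A block map is an idempotent if its domain equals its codomain and it satisfies $f_i f_i=f_i$. *)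

theory Defs
  imports "HOL-Library.FuncSet"
begin

definition is_partition :: "'a set \<Rightarrow> 'i set \<Rightarrow> ('i \<Rightarrow> 'a set) \<Rightarrow> bool" where
  "is_partition X I P \<longleftrightarrow>
     (\<forall>i\<in>I. P i \<noteq> {}) \<and>
     (\<forall>i\<in>I. \<forall>j\<in>I. i \<noteq> j \<longrightarrow> P i \<inter> P j = {}) \<and>
     (\<Union>i\<in>I. P i) = X"

definition T_part :: "'a set \<Rightarrow> 'i set \<Rightarrow> ('i \<Rightarrow> 'a set) \<Rightarrow> ('a \<Rightarrow> 'a) set" where
  "T_part X I P = {f. f \<in> X \<rightarrow> X \<and> (\<forall>i\<in>I. \<exists>j\<in>I. f ` P i \<subseteq> P j)}"

definition Sigma_part :: "'a set \<Rightarrow> 'i set \<Rightarrow> ('i \<Rightarrow> 'a set) \<Rightarrow> ('a \<Rightarrow> 'a) set" where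
  "Sigma_part X I P = {f \<in> T_part X I P. \<forall>i\<in>I. f ` X \<inter> P i \<noteq> {}}"

text \<open>A block map is represented as a triple (domain, codomain, map restricted to domain).\<close>
type_synonym 'a block_map = "'a set \<times> 'a set \<times> ('a \<Rightarrow> 'a)"

definition induced_block_map :: "'i set \<Rightarrow> ('i \<Rightarrow> 'a set) \<Rightarrow> ('a \<Rightarrow> 'a) \<Rightarrow> 'i \<Rightarrow> 'a block_map" where
  "induced_block_map I P f i =
     (P i, P (THE j. j \<in> I \<and> f ` P i \<subseteq> P j), restrict f (P i))"

definition block_maps :: "('a \<Rightarrow> 'a) \<Rightarrow> 'i set \<Rightarrow> ('i \<Rightarrow> 'a set) \<Rightarrow> 'a block_map set" where
  "block_maps f I P = induced_block_map I P f ` I"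

definition block_idempotent :: "'a block_map \<Rightarrow> bool" where
  "block_idempotent b \<longleftrightarrow>
     (case b of (A, B, g) \<Rightarrow> A = B \<and> (\<forall>x\<in>A. g (g x) = g x))"

definition idempotent_on :: "'a set \<Rightarrow> ('a \<Rightarrow> 'a) \<Rightarrow> bool" where
  "idempotent_on X f \<longleftrightarrow> (\<forall>x\<in>X. f (f x) = f x)"

end

theory Submission
  imports Defs
begin

text \<open>A block map f_i is idempotent exactly when f maps X_i into itself and is idempotent on X_i,
  so the block maps are all idempotent iff f is idempotent and fixes every block setwise. The
  latter is automatic for an idempotent f in Sigma(X,P): its image meets every block X_i, and a
  point of the image is fixed by f, hence lies both in X_i and in the block containing X_i f.\<close>

lemma partition_index_unique:
  assumes "is_partition X I P" "i \<in> I" "j \<in> I" "x \<in> P i" "x \<in> P j"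
  shows "i = j"
  using assms unfolding is_partition_def by blast

lemma induced_block_map_eq:
  assumes part: "is_partition X I P" and "i \<in> I" "j \<in> I" "f ` P i \<subseteq> P j"
  shows "induced_block_map I P f i = (P i, P j, restrict f (P i))"
proof -
  have "(THE j. j \<in> I \<and> f ` P i \<subseteq> P j) = j"
  proof (rule the_equality)
    fix k assume k: "k \<in> I \<and> f ` P i \<subseteq> P k"
    obtain x where "x \<in> P i" using part \<open>i \<in> I\<close> unfolding is_partition_def by blast
    then show "k = j"
      using k assms partition_index_unique[OF part, of k j "f x"] by blast
  qed (use assms in blast)
  then show ?thesis unfolding induced_block_map_def by simp
qed

lemma block_idempotent_induced_block_map_iff:
  assumes part: "is_partition X I P" and i: "i \<in> I" and "j \<in> I" and into: "f ` P i \<subseteq> P j"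
  shows "block_idempotent (induced_block_map I P f i) \<longleftrightarrow>
           f ` P i \<subseteq> P i \<and> (\<forall>x\<in>P i. f (f x) = f x)"
proof -
  have "P i = P j \<longleftrightarrow> f ` P i \<subseteq> P i"
  proof
    assume "f ` P i \<subseteq> P i"
    moreover obtain x where "x \<in> P i" using part i unfolding is_partition_def by blast
    ultimately have "f x \<in> P i" "f x \<in> P j" using into by blast+
    then show "P i = P j" using partition_index_unique[OF part i \<open>j \<in> I\<close>] by blast
  qed (use into in simp)
  then show ?thesis
    unfolding induced_block_map_eq[OF assms] block_idempotent_def by auto
qed

lemma block_maps_idempotent_iff:
  assumes part: "is_partition X I P" and "f \<in> T_part X I P"
  shows "(\<forall>b\<in>block_maps f I P. block_idempotent b) \<longleftrightarrow>
           (\<forall>i\<in>I. f ` P i \<subseteq> P i) \<and> idempotent_on X f"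
proof -
  have "block_idempotent (induced_block_map I P f i) \<longleftrightarrow>
          f ` P i \<subseteq> P i \<and> (\<forall>x\<in>P i. f (f x) = f x)" if i: "i \<in> I" for i
  proof -
    obtain j where "j \<in> I" "f ` P i \<subseteq> P j"
      using \<open>f \<in> T_part X I P\<close> i unfolding T_part_def by blast
    then show ?thesis using block_idempotent_induced_block_map_iff[OF part i] by blast
  qed
  moreover have "X = (\<Union>i\<in>I. P i)" using part unfolding is_partition_def by blast
  ultimately show ?thesis unfolding block_maps_def idempotent_on_def by auto
qed

lemma Sigma_part_idempotent_maps_block_into_itself:
  assumes part: "is_partition X I P" and f: "f \<in> Sigma_part X I P"
    and idem: "idempotent_on X f" and i: "i \<in> I"
  shows "f ` P i \<subseteq> P i"
proof -
  obtain j where j: "j \<in> I" and into: "f ` P i \<subseteq> P j"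
    using f i unfolding Sigma_part_def T_part_def by blast
  obtain y where y: "y \<in> X" "f y \<in> P i" using f i unfolding Sigma_part_def by blast
  then have "f (f y) = f y" using idem unfolding idempotent_on_def by blast
  then have "f y \<in> P j" using into y by (metis image_subset_iff)
  then have "j = i" using partition_index_unique[OF part j i] y by blast
  then show ?thesis using into by simp
qed

theorem theorem5p6:
  fixes X :: "'a set" and I :: "'i set" and P :: "'i \<Rightarrow> 'a set" and f :: "'a \<Rightarrow> 'a"
  assumes "is_partition X I P"
    and "f \<in> Sigma_part X I P"
  shows "idempotent_on X f \<longleftrightarrow> (\<forall>b\<in>block_maps f I P. block_idempotent b)"
proof -
  have "f \<in> T_part X I P" using assms(2) unfolding Sigma_part_def by blast
  then show ?thesis
    using block_maps_idempotent_iff[OF assms(1)]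
      Sigma_part_idempotent_maps_block_into_itself[OF assms] by blast
qed

end
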